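(* For every $\theta\in[0,1]$, $f(\theta)=l(\theta)$.
   Context: A weighted digraph $D=(V,A,w)$ is a digraph without loops or parallel arcs (opposite arcs allowed) with weights $w:A\to\mathbb{R}_{\ge0}$; $w(D)$ is the total arc weight. For a partition $(X,Y)$ of $V$, $w(X,Y)$ is the total weight of arcs from $X$ to $Y$, and $\mathrm{mac}(D)=\max_{(X,Y)}w(X,Y)$. For $v\in V$, $r(v)=w^+(v)-w^-(v)$ (total weight leaving minus total weight entering $v$); $r^+(D)=\sum_{r(x)>0}r(x)$; $\theta(D)=r^+(D)/w(D)$ for $w(D)>0$. For $\theta\in[0,1]$, $f(\theta)$ is the supremum of all reals $g$ such that $\mathrm{mac}(D)\ge g\cdot w(D)$ for all weighted digraphs $D$ with $w(D)>0$ and $\theta(D)=\theta$. Also $l(\theta)=\frac14+\frac{\theta^2}{4(1-2\theta)}$ if $\theta<1/3$ and $l(\theta)=\theta$ if $\theta\ge1/3$. *)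

theory Defs
  imports Complex_Main
begin

text \<open>The weight function w is zero off V x V and on the diagonal (no loops);
an arc (u,v) is present iff w u v > 0, so parallel arcs cannot occur while opposite arcs may.\<close>

definition weighted_digraph :: "nat set \<Rightarrow> (nat \<Rightarrow> nat \<Rightarrow> real) \<Rightarrow> bool" where
  "weighted_digraph V w \<longleftrightarrow> finite V \<and> (\<forall>u v. w u v \<ge> 0) \<and> (\<forall>v. w v v = 0)
     \<and> (\<forall>u v. (u \<notin> V \<or> v \<notin> V) \<longrightarrow> w u v = 0)"

definition total_weight :: "nat set \<Rightarrow> (nat \<Rightarrow> nat \<Rightarrow> real) \<Rightarrow> real" where
  "total_weight V w = (\<Sum>u\<in>V. \<Sum>v\<in>V. w u v)"

definition cut_weight :: "(nat \<Rightarrow> nat \<Rightarrow> real) \<Rightarrow> nat set \<Rightarrow> nat set \<Rightarrow> real" where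
  "cut_weight w X Y = (\<Sum>x\<in>X. \<Sum>y\<in>Y. w x y)"

definition mac :: "nat set \<Rightarrow> (nat \<Rightarrow> nat \<Rightarrow> real) \<Rightarrow> real" where
  "mac V w = Max {cut_weight w X (V - X) | X. X \<subseteq> V}"

definition excess :: "nat set \<Rightarrow> (nat \<Rightarrow> nat \<Rightarrow> real) \<Rightarrow> nat \<Rightarrow> real" where
  "excess V w v = (\<Sum>y\<in>V. w v y) - (\<Sum>y\<in>V. w y v)"

definition rplus :: "nat set \<Rightarrow> (nat \<Rightarrow> nat \<Rightarrow> real) \<Rightarrow> real" where
  "rplus V w = (\<Sum>x\<in>{x\<in>V. excess V w x > 0}. excess V w x)"

definition theta :: "nat set \<Rightarrow> (nat \<Rightarrow> nat \<Rightarrow> real) \<Rightarrow> real" where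
  "theta V w = rplus V w / total_weight V w"

definition f_fun :: "real \<Rightarrow> real" where
  "f_fun t = Sup {g. \<forall>V w. weighted_digraph V w \<and> total_weight V w > 0 \<and> theta V w = t
                 \<longrightarrow> mac V w \<ge> g * total_weight V w}"

definition l_fun :: "real \<Rightarrow> real" where
  "l_fun t = (if t < 1/3 then 1/4 + t^2 / (4 * (1 - 2*t)) else t)"

end

theory Submission
  imports Defs
begin

text \<open>Lower bound: put each vertex of positive excess into X independently with probability s
  and every other vertex with probability 1 - s. The expected cut is at least
  (s (1 - s) (1 - \<theta>) + s^2 \<theta>) w(D), some actual cut is at least its expectation, and the
  best choice of s gives l(\<theta>). Upper bound: two cliques on n vertices each, plus all arcs from
  the first to the second, weighted so that \<theta> = t; its maximum cut is at most n/(n-1) l(t)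
  times its total weight, and n tends to infinity.\<close>

text \<open>Expected weight of (X, V - X) when each v enters X independently with probability p v.\<close>
definition expected_cut :: "nat set \<Rightarrow> (nat \<Rightarrow> nat \<Rightarrow> real) \<Rightarrow> (nat \<Rightarrow> real) \<Rightarrow> real" where
  "expected_cut V w p = (\<Sum>u\<in>V. \<Sum>v\<in>V. w u v * p u * (1 - p v))"

lemma mac_ge_cut_weight:
  assumes "finite V" "X \<subseteq> V"
  shows "cut_weight w X (V - X) \<le> mac V w"
proof -
  have "{cut_weight w X (V - X) | X. X \<subseteq> V} = (\<lambda>X. cut_weight w X (V - X)) ` Pow V" by auto
  then show ?thesis unfolding mac_def using assms by (auto intro: Max_ge)
qed

lemma mac_leI:
  assumes "finite V" "\<And>X. X \<subseteq> V \<Longrightarrow> cut_weight w X (V - X) \<le> c"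
  shows "mac V w \<le> c"
proof -
  have "{cut_weight w X (V - X) | X. X \<subseteq> V} = (\<lambda>X. cut_weight w X (V - X)) ` Pow V" by auto
  then show ?thesis unfolding mac_def using assms by (subst Max_le_iff) auto
qed

lemma expected_cut_cong:
  "(\<And>v. v \<in> V \<Longrightarrow> p v = q v) \<Longrightarrow> expected_cut V w p = expected_cut V w q"
  unfolding expected_cut_def by (intro sum.cong) auto

lemma expected_cut_indicator:
  assumes "finite V" "X \<subseteq> V"
  shows "expected_cut V w (\<lambda>v. if v \<in> X then 1 else 0) = cut_weight w X (V - X)"
proof -
  have "expected_cut V w (\<lambda>v. if v \<in> X then 1 else 0)
      = (\<Sum>u\<in>V. if u \<in> X then (\<Sum>v\<in>V. if v \<notin> X then w u v else 0) else 0)"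
    unfolding expected_cut_def by (auto intro!: sum.cong)
  also have "\<dots> = (\<Sum>u\<in>X. \<Sum>v\<in>V - X. w u v)"
    using assms by (simp add: sum.inter_filter[symmetric] set_diff_eq Int_absorb1 Collect_mem_eq
        flip: Int_def)
  finally show ?thesis unfolding cut_weight_def .
qed

lemma expected_cut_affine:
  assumes "w z z = 0"
  shows "expected_cut V w p
    = (1 - p z) * expected_cut V w (p(z := 0)) + p z * expected_cut V w (p(z := 1))"
proof -
  have "w u v * p u * (1 - p v)
      = (1 - p z) * (w u v * (p(z := 0)) u * (1 - (p(z := 0)) v))
        + p z * (w u v * (p(z := 1)) u * (1 - (p(z := 1)) v))" for u v
    using assms by (cases "u = z"; cases "v = z") (auto simp: algebra_simps)
  then show ?thesis
    unfolding expected_cut_def sum_distrib_left sum.distrib[symmetric] by simp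
qed

text \<open>Derandomization: fixing the fractional vertices one at a time, each time to the better
  of the two values, never decreases the expected cut, because it is affine in each value.\<close>
lemma expected_cut_le_cut_weight:
  assumes "finite V" "\<forall>v. w v v = 0" "\<forall>v\<in>V. 0 \<le> p v \<and> p v \<le> 1"
  shows "\<exists>X\<subseteq>V. expected_cut V w p \<le> cut_weight w X (V - X)"
proof -
  have "\<exists>X\<subseteq>V. expected_cut V w p \<le> cut_weight w X (V - X)"
    if "finite S" "S \<subseteq> V" "\<forall>v\<in>V. 0 \<le> p v \<and> p v \<le> 1" "\<forall>v\<in>V - S. p v = 0 \<or> p v = 1"
    for S p
    using that
  proof (induction S arbitrary: p rule: finite_induct)
    case empty
    define X where "X = {v\<in>V. p v = 1}"
    have "expected_cut V w p = expected_cut V w (\<lambda>v. if v \<in> X then 1 else 0)"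
      using empty.prems by (intro expected_cut_cong) (auto simp: X_def)
    also have "\<dots> = cut_weight w X (V - X)"
      using assms(1) by (rule expected_cut_indicator) (auto simp: X_def)
    finally have "expected_cut V w p = cut_weight w X (V - X)" .
    moreover have "X \<subseteq> V" by (auto simp: X_def)
    ultimately show ?case by (metis order_refl)
  next
    case (insert z S)
    have "\<exists>X\<subseteq>V. expected_cut V w (p(z := 0)) \<le> cut_weight w X (V - X)"
      using insert.prems by (intro insert.IH) auto
    then obtain X0 where X0: "X0 \<subseteq> V" "expected_cut V w (p(z := 0)) \<le> cut_weight w X0 (V - X0)"
      by blast
    have "\<exists>X\<subseteq>V. expected_cut V w (p(z := 1)) \<le> cut_weight w X (V - X)"
      using insert.prems by (intro insert.IH) auto
    then obtain X1 where X1: "X1 \<subseteq> V" "expected_cut V w (p(z := 1)) \<le> cut_weight w X1 (V - X1)"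
      by blast
    define c where "c = max (cut_weight w X0 (V - X0)) (cut_weight w X1 (V - X1))"
    have "expected_cut V w p
        = (1 - p z) * expected_cut V w (p(z := 0)) + p z * expected_cut V w (p(z := 1))"
      using assms(2) by (intro expected_cut_affine) simp
    also have "\<dots> \<le> c"
      using X0 X1 insert.prems by (intro convex_bound_le) (auto simp: c_def)
    finally show ?case using X0(1) X1(1) unfolding c_def max_def by (auto split: if_splits)
  qed
  from this[of V p] show ?thesis using assms by auto
qed

lemma expected_cut_le_mac:
  assumes "weighted_digraph V w" "\<forall>v\<in>V. 0 \<le> p v \<and> p v \<le> 1"
  shows "expected_cut V w p \<le> mac V w"
proof -
  have "finite V" "\<forall>v. w v v = 0" using assms(1) unfolding weighted_digraph_def by auto
  with assms(2) show ?thesis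
    using expected_cut_le_cut_weight mac_ge_cut_weight order_trans by metis
qed

lemma sum_sum_split_blocks:
  fixes h :: "nat \<Rightarrow> nat \<Rightarrow> real"
  assumes "finite V" "A \<subseteq> V"
  shows "(\<Sum>u\<in>V. \<Sum>v\<in>V. h u v) = (\<Sum>u\<in>A. \<Sum>v\<in>A. h u v) + (\<Sum>u\<in>A. \<Sum>v\<in>V - A. h u v)
     + (\<Sum>u\<in>V - A. \<Sum>v\<in>A. h u v) + (\<Sum>u\<in>V - A. \<Sum>v\<in>V - A. h u v)"
proof -
  have split: "sum g V = sum g A + sum g (V - A)" for g :: "nat \<Rightarrow> real"
    using sum.subset_diff[OF assms(2,1), of g] by linarith
  show ?thesis by (simp add: split sum.distrib)
qed

lemma total_weight_split:
  assumes "finite V" "A \<subseteq> V"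
  shows "total_weight V w = cut_weight w A A + cut_weight w A (V - A)
     + cut_weight w (V - A) A + cut_weight w (V - A) (V - A)"
  unfolding total_weight_def cut_weight_def using assms by (rule sum_sum_split_blocks)

lemma sum_excess_eq_cut_weight_diff:
  assumes "finite V" "A \<subseteq> V"
  shows "(\<Sum>x\<in>A. excess V w x) = cut_weight w A (V - A) - cut_weight w (V - A) A"
proof -
  have split: "sum g V = sum g A + sum g (V - A)" for g :: "nat \<Rightarrow> real"
    using sum.subset_diff[OF assms(2,1), of g] by linarith
  have "(\<Sum>x\<in>A. excess V w x) = (\<Sum>x\<in>A. \<Sum>y\<in>V. w x y) - (\<Sum>y\<in>V. \<Sum>x\<in>A. w y x)"
    unfolding excess_def by (simp add: sum_subtractf sum.swap[of _ A])
  also have "\<dots> = cut_weight w A A + cut_weight w A (V - A) - (cut_weight w A A + cut_weight w (V - A) A)"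
    unfolding cut_weight_def split by (simp add: sum.distrib)
  finally show ?thesis by simp
qed

lemma expected_cut_two_valued:
  assumes "finite V" "A \<subseteq> V"
  shows "expected_cut V w (\<lambda>v. if v \<in> A then s else 1 - s)
    = s * (1 - s) * cut_weight w A A + s\<^sup>2 * cut_weight w A (V - A)
      + (1 - s)\<^sup>2 * cut_weight w (V - A) A + s * (1 - s) * cut_weight w (V - A) (V - A)"
  unfolding expected_cut_def sum_sum_split_blocks[OF assms] cut_weight_def
  by (simp add: sum_distrib_left power2_eq_square mult_ac)

lemma mac_ge_two_valued:
  assumes "weighted_digraph V w" "0 \<le> s" "s \<le> 1"
  shows "s * (1 - s) * (total_weight V w - rplus V w) + s\<^sup>2 * rplus V w \<le> mac V w"
proof -
  have fin: "finite V" using assms(1) unfolding weighted_digraph_def by simp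
  define P where "P = {x\<in>V. excess V w x > 0}"
  have PV: "P \<subseteq> V" unfolding P_def by auto
  have rplus: "rplus V w = cut_weight w P (V - P) - cut_weight w (V - P) P"
    unfolding rplus_def P_def[symmetric] using fin PV by (rule sum_excess_eq_cut_weight_diff)
  have "expected_cut V w (\<lambda>v. if v \<in> P then s else 1 - s)
      = s * (1 - s) * (total_weight V w - rplus V w) + s\<^sup>2 * rplus V w
        + (1 - 2 * s)\<^sup>2 * cut_weight w (V - P) P"
    unfolding expected_cut_two_valued[OF fin PV] total_weight_split[OF fin PV] rplus
    by (simp add: algebra_simps power2_eq_square)
  moreover have "cut_weight w (V - P) P \<ge> 0"
    using assms(1) unfolding weighted_digraph_def cut_weight_def by (simp add: sum_nonneg)
  ultimately have "s * (1 - s) * (total_weight V w - rplus V w) + s\<^sup>2 * rplus V w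
      \<le> expected_cut V w (\<lambda>v. if v \<in> P then s else 1 - s)"
    by simp
  also have "\<dots> \<le> mac V w"
    using assms by (intro expected_cut_le_mac) auto
  finally show ?thesis .
qed

lemma l_fun_le_two_valued:
  fixes t :: real
  assumes "0 \<le> t"
  obtains s where "0 \<le> s" "s \<le> 1" "l_fun t \<le> s * (1 - s) * (1 - t) + s\<^sup>2 * t"
proof (cases "t < 1/3")
  case True
  define s where "s = (1 - t) / (2 * (1 - 2 * t))"
  have pos: "1 - 2 * t > 0" using True by simp
  have s: "2 * (1 - 2 * t) * s = 1 - t" unfolding s_def using pos by simp
  have "4 * (1 - 2 * t) * (s * (1 - s) * (1 - t) + s\<^sup>2 * t)
      = (1 - t) * (2 * (2 * (1 - 2 * t) * s)) - (2 * (1 - 2 * t) * s)\<^sup>2"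
    by (simp add: algebra_simps power2_eq_square)
  also have "\<dots> = 4 * (1 - 2 * t) * l_fun t"
    unfolding s l_fun_def using True pos by (simp add: field_simps power2_eq_square)
  finally have "l_fun t = s * (1 - s) * (1 - t) + s\<^sup>2 * t" using pos by simp
  moreover have "0 \<le> s" "s \<le> 1" unfolding s_def using pos True assms by (simp_all add: field_simps)
  ultimately show ?thesis using that by simp
next
  case False
  then show ?thesis using that[of 1] by (simp add: l_fun_def)
qed

lemma mac_ge_l_fun:
  assumes "weighted_digraph V w" "total_weight V w > 0" "theta V w = t" "0 \<le> t"
  shows "l_fun t * total_weight V w \<le> mac V w"
proof -
  obtain s where s: "0 \<le> s" "s \<le> 1" "l_fun t \<le> s * (1 - s) * (1 - t) + s\<^sup>2 * t"
    using l_fun_le_two_valued[OF assms(4)] by blast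
  have rplus: "rplus V w = t * total_weight V w"
    using assms(2,3) unfolding theta_def by (simp add: field_simps)
  have "l_fun t * total_weight V w \<le> (s * (1 - s) * (1 - t) + s\<^sup>2 * t) * total_weight V w"
    using s(3) assms(2) by (simp add: mult_right_mono)
  also have "\<dots> = s * (1 - s) * (total_weight V w - rplus V w) + s\<^sup>2 * rplus V w"
    unfolding rplus by (simp add: algebra_simps)
  also have "\<dots> \<le> mac V w" using assms(1) s(1,2) by (rule mac_ge_two_valued)
  finally show ?thesis .
qed

text \<open>p and q stand for the fractions of the two cliques of the extremal example lying in X.\<close>
lemma two_block_cut_density_le_l_fun:
  fixes t p q :: real
  assumes "0 \<le> t" "t \<le> 1" "0 \<le> p" "p \<le> 1" "0 \<le> q" "q \<le> 1"
  shows "(1 - t) / 2 * (p * (1 - p) + q * (1 - q)) + t * p * (1 - q) \<le> l_fun t"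
proof -
  define d where "d = p - q"
  have d: "-1 \<le> d" "d \<le> 1" unfolding d_def using assms by auto
  have "(1 - t) / 2 * (p * (1 - p) + q * (1 - q)) + t * p * (1 - q)
      = 1/4 + t * d / 2 - (1 - 2 * t) * d\<^sup>2 / 4 - (p + q - 1)\<^sup>2 / 4"
    unfolding d_def by (simp add: field_simps power2_eq_square)
  also have "\<dots> \<le> 1/4 + t * d / 2 - (1 - 2 * t) * d\<^sup>2 / 4" by simp
  also have "\<dots> \<le> l_fun t"
  proof (cases "t < 1/3")
    case True
    have pos: "1 - 2 * t > 0" using True by simp
    have "4 * (1 - 2 * t) * (1/4 + t * d / 2 - (1 - 2 * t) * d\<^sup>2 / 4)
        = (1 - 2 * t) + t\<^sup>2 - ((1 - 2 * t) * d - t)\<^sup>2"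
      by (simp add: field_simps power2_eq_square)
    also have "\<dots> \<le> (1 - 2 * t) + t\<^sup>2" by simp
    also have "\<dots> = 4 * (1 - 2 * t) * l_fun t"
      unfolding l_fun_def using True pos by (simp add: field_simps)
    finally show ?thesis using pos by simp
  next
    case False
    have "1 + 2 * t * d - (1 - 2 * t) * d\<^sup>2 - 4 * t = (d - 1) * (2 * t - (1 - 2 * t) * (d + 1))"
      by (simp add: algebra_simps power2_eq_square)
    also have "\<dots> \<le> 0"
    proof (rule mult_nonpos_nonneg)
      show "2 * t - (1 - 2 * t) * (d + 1) \<ge> 0"
      proof (cases "2 * t \<le> 1")
        case True
        then have "(1 - 2 * t) * (d + 1) \<le> (1 - 2 * t) * 2" using d by (intro mult_left_mono) auto
        then show ?thesis using False by simp
      next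
        case False
        then have "(1 - 2 * t) * (d + 1) \<le> 0" using d by (intro mult_nonpos_nonneg) auto
        then show ?thesis using assms by linarith
      qed
    qed (use d in simp)
    finally show ?thesis unfolding l_fun_def using False by simp
  qed
  finally show ?thesis .
qed

lemma sum_const_off_point:
  assumes "finite A" "u \<in> A" "f u = 0" "\<And>y. y \<in> A \<Longrightarrow> y \<noteq> u \<Longrightarrow> f y = c"
  shows "sum f A = (real (card A) - 1) * (c :: real)"
proof -
  have "sum f A = f u + sum f (A - {u})" using assms(1,2) by (rule sum.remove)
  also have "sum f (A - {u}) = (\<Sum>y\<in>A - {u}. c)" using assms(4) by (intro sum.cong) auto
  finally show ?thesis
    using assms(1-3) card_gt_0_iff[of A] by (auto simp: card_Diff_singleton of_nat_diff)
qed

lemma sum_sum_const: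
  assumes "\<And>x y. x \<in> A \<Longrightarrow> y \<in> B \<Longrightarrow> f x y = c"
  shows "(\<Sum>x\<in>A. \<Sum>y\<in>B. f x y) = real (card A) * real (card B) * (c :: real)"
  using assms by simp

lemma sum_lessThan_double:
  "(\<Sum>y<2 * (n :: nat). g y) = (\<Sum>y<n. g y) + (\<Sum>y\<in>{n..<2 * n}. (g y :: real))"
proof -
  have "{..<2 * n} = {..<n} \<union> {n..<2 * n}" by auto
  then show ?thesis by (simp add: sum.union_disjoint ivl_disj_int)
qed

definition clique_arc_weight :: "nat \<Rightarrow> real \<Rightarrow> real" where
  "clique_arc_weight n t = (1 - t) / (2 * real n * (real n - 1))"

definition cross_arc_weight :: "nat \<Rightarrow> real \<Rightarrow> real" where
  "cross_arc_weight n t = t / (real n)\<^sup>2"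

text \<open>Complete digraphs on {..<n} and on {n..<2n}, together with all arcs from the first to the
  second; the weights make the total weight 1 and r^+ equal to t.\<close>
definition two_cliques :: "nat \<Rightarrow> real \<Rightarrow> nat \<Rightarrow> nat \<Rightarrow> real" where
  "two_cliques n t u v =
    (if u < n \<and> v < n \<and> u \<noteq> v then clique_arc_weight n t
     else if n \<le> u \<and> u < 2 * n \<and> n \<le> v \<and> v < 2 * n \<and> u \<noteq> v then clique_arc_weight n t
     else if u < n \<and> n \<le> v \<and> v < 2 * n then cross_arc_weight n t
     else 0)"

context
  fixes n :: nat and t :: real
  assumes n: "2 \<le> n" and t: "0 \<le> t" "t \<le> 1"
begin

private abbreviation "a \<equiv> clique_arc_weight n t"
private abbreviation "b \<equiv> cross_arc_weight n t"
private abbreviation "w \<equiv> two_cliques n t"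

lemma two_cliques_weighted_digraph: "weighted_digraph {..<2 * n} w"
  using n t unfolding weighted_digraph_def two_cliques_def clique_arc_weight_def cross_arc_weight_def
  by auto

lemma two_cliques_out_weight:
  assumes "u < 2 * n"
  shows "(\<Sum>y<2 * n. w u y) = (real n - 1) * a + (if u < n then real n * b else 0)"
proof (cases "u < n")
  case True
  have "(\<Sum>y<n. w u y) = (real n - 1) * a"
    using True by (subst sum_const_off_point[where u = u]) (auto simp: two_cliques_def)
  moreover have "(\<Sum>y\<in>{n..<2 * n}. w u y) = real n * b"
    using True by (simp add: two_cliques_def)
  ultimately show ?thesis using True by (simp add: sum_lessThan_double)
next
  case False
  have "(\<Sum>y<n. w u y) = 0"
    using False by (intro sum.neutral) (auto simp: two_cliques_def)
  moreover have "(\<Sum>y\<in>{n..<2 * n}. w u y) = (real n - 1) * a"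
    using False assms by (subst sum_const_off_point[where u = u]) (auto simp: two_cliques_def)
  ultimately show ?thesis using False by (simp add: sum_lessThan_double)
qed

lemma two_cliques_in_weight:
  assumes "u < 2 * n"
  shows "(\<Sum>y<2 * n. w y u) = (real n - 1) * a + (if u < n then 0 else real n * b)"
proof (cases "u < n")
  case True
  have "(\<Sum>y<n. w y u) = (real n - 1) * a"
    using True by (subst sum_const_off_point[where u = u]) (auto simp: two_cliques_def)
  moreover have "(\<Sum>y\<in>{n..<2 * n}. w y u) = 0"
    using True by (intro sum.neutral) (auto simp: two_cliques_def)
  ultimately show ?thesis using True by (simp add: sum_lessThan_double)
next
  case False
  have "(\<Sum>y<n. w y u) = real n * b"
    using False assms by (simp add: two_cliques_def)
  moreover have "(\<Sum>y\<in>{n..<2 * n}. w y u) = (real n - 1) * a"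
    using False assms by (subst sum_const_off_point[where u = u]) (auto simp: two_cliques_def)
  ultimately show ?thesis using False by (simp add: sum_lessThan_double)
qed

lemma two_cliques_total_weight: "total_weight {..<2 * n} w = 1"
proof -
  have "total_weight {..<2 * n} w = (\<Sum>u<2 * n. (real n - 1) * a + (if u < n then real n * b else 0))"
    unfolding total_weight_def by (intro sum.cong) (auto simp: two_cliques_out_weight)
  also have "\<dots> = 2 * real n * (real n - 1) * a + real n * real n * b"
    by (simp add: sum_lessThan_double sum.distrib)
  also have "\<dots> = 1"
    using n unfolding clique_arc_weight_def cross_arc_weight_def
    by (simp add: field_simps power2_eq_square)
  finally show ?thesis .
qed

lemma two_cliques_excess:
  assumes "u < 2 * n"
  shows "excess {..<2 * n} w u = (if u < n then real n * b else - (real n * b))"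
  unfolding excess_def lessThan_def[symmetric]
  using two_cliques_out_weight[OF assms] two_cliques_in_weight[OF assms] by simp

lemma two_cliques_rplus: "rplus {..<2 * n} w = t"
proof -
  have b: "b \<ge> 0" using t unfolding cross_arc_weight_def by simp
  have "rplus {..<2 * n} w
      = (\<Sum>u<2 * n. if excess {..<2 * n} w u > 0 then excess {..<2 * n} w u else 0)"
    unfolding rplus_def by (rule sum.inter_filter) simp
  also have "\<dots> = (\<Sum>u<2 * n. if u < n then real n * b else 0)"
    using b n by (intro sum.cong) (auto simp: two_cliques_excess zero_less_mult_iff mult_less_0_iff)
  also have "\<dots> = real n * real n * b" by (simp add: sum_lessThan_double)
  also have "\<dots> = t" using n unfolding cross_arc_weight_def by (simp add: power2_eq_square)
  finally show ?thesis .
qed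

lemma two_cliques_theta: "theta {..<2 * n} w = t"
  unfolding theta_def two_cliques_rplus two_cliques_total_weight by simp

lemma two_cliques_cut_weight:
  assumes "X \<subseteq> {..<2 * n}"
  defines "k \<equiv> card (X \<inter> {..<n})" and "m \<equiv> card (X \<inter> {n..<2 * n})"
  shows "cut_weight w X ({..<2 * n} - X)
    = a * real k * (real n - real k) + b * real k * (real n - real m) + a * real m * (real n - real m)"
proof -
  let ?P = "{..<n}" and ?N = "{n..<2 * n}"
  have X: "sum g X = sum g (X \<inter> ?P) + sum g (X \<inter> ?N)" for g :: "nat \<Rightarrow> real"
  proof -
    have "X - ?P = X \<inter> ?N" using assms(1) by auto
    then show ?thesis using sum.Int_Diff[of X g ?P] assms(1) finite_subset by auto
  qed
  have Y: "sum g ({..<2 * n} - X) = sum g (?P - X) + sum g (?N - X)" for g :: "nat \<Rightarrow> real"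
  proof -
    have "({..<2 * n} - X) \<inter> ?P = ?P - X" "({..<2 * n} - X) - ?P = ?N - X" by auto
    then show ?thesis using sum.Int_Diff[of "{..<2 * n} - X" g ?P] by simp
  qed
  have card: "card (?P - X) = n - k" "card (?N - X) = n - m"
    unfolding k_def m_def by (auto simp: card_Diff_subset_Int Int_commute)
  have "k \<le> n" "m \<le> n"
    unfolding k_def m_def using card_mono[of ?P "X \<inter> ?P"] card_mono[of ?N "X \<inter> ?N"] by auto
  have "cut_weight w X ({..<2 * n} - X)
      = (\<Sum>x\<in>X \<inter> ?P. \<Sum>y\<in>?P - X. w x y) + (\<Sum>x\<in>X \<inter> ?P. \<Sum>y\<in>?N - X. w x y)
        + (\<Sum>x\<in>X \<inter> ?N. \<Sum>y\<in>?P - X. w x y) + (\<Sum>x\<in>X \<inter> ?N. \<Sum>y\<in>?N - X. w x y)"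
    unfolding cut_weight_def X Y by (simp add: sum.distrib)
  also have "\<dots> = a * real k * real (n - k) + b * real k * real (n - m) + 0 + a * real m * real (n - m)"
    unfolding card(1,2)[symmetric] unfolding k_def m_def
    by (intro arg_cong2[where f = "(+)"]; subst sum_sum_const) (auto simp: two_cliques_def)
  finally show ?thesis using \<open>k \<le> n\<close> \<open>m \<le> n\<close> by (simp add: of_nat_diff)
qed

lemma two_cliques_mac_le: "mac {..<2 * n} w \<le> real n / (real n - 1) * l_fun t"
proof (rule mac_leI)
  fix X assume X: "X \<subseteq> {..<2 * n}"
  define p where "p = real (card (X \<inter> {..<n})) / real n"
  define q where "q = real (card (X \<inter> {n..<2 * n})) / real n"
  have "card (X \<inter> {..<n}) \<le> n" "card (X \<inter> {n..<2 * n}) \<le> n"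
    using card_mono[of "{..<n}" "X \<inter> {..<n}"] card_mono[of "{n..<2 * n}" "X \<inter> {n..<2 * n}"] by auto
  then have pq: "0 \<le> p" "p \<le> 1" "0 \<le> q" "q \<le> 1" using n by (auto simp: p_def q_def)
  have ratio: "real n / (real n - 1) \<ge> 1" using n by simp
  have scale: "(1 - t) / (2 * N * (N - 1)) * (x * N) * (N - x * N) = N / (N - 1) * ((1 - t) / 2 * (x * (1 - x)))"
    "t / N\<^sup>2 * (x * N) * (N - y * N) = t * x * (1 - y)" if "N > 1" for N x y :: real
    using that by (simp_all add: field_simps power2_eq_square)
  have "real (card (X \<inter> {..<n})) = p * real n" "real (card (X \<inter> {n..<2 * n})) = q * real n"
    using n by (simp_all add: p_def q_def)
  moreover have "real n > 1" using n by simp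
  ultimately have "cut_weight w X ({..<2 * n} - X)
      = real n / (real n - 1) * ((1 - t) / 2 * (p * (1 - p) + q * (1 - q))) + t * p * (1 - q)"
    unfolding two_cliques_cut_weight[OF X] clique_arc_weight_def cross_arc_weight_def
    by (simp only: scale distrib_left)
  also have "\<dots> \<le> real n / (real n - 1) * ((1 - t) / 2 * (p * (1 - p) + q * (1 - q)) + t * p * (1 - q))"
    using mult_right_mono[OF ratio, of "t * p * (1 - q)"] pq t by (simp add: distrib_left)
  also have "\<dots> \<le> real n / (real n - 1) * l_fun t"
    using two_block_cut_density_le_l_fun[OF t pq] n by (intro mult_left_mono) auto
  finally show "cut_weight w X ({..<2 * n} - X) \<le> real n / (real n - 1) * l_fun t" .
qed simp

end

lemma le_of_le_n_over_n_minus_one_mult: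
  fixes g c :: real
  assumes "\<And>n. 2 \<le> n \<Longrightarrow> g \<le> real n / (real n - 1) * c"
  shows "g \<le> c"
proof (rule LIMSEQ_le_const)
  show "(\<lambda>n. real (Suc n) / real n * c) \<longlonglongrightarrow> c"
    using tendsto_mult_right[OF LIMSEQ_Suc_n_over_n, of c] by simp
  show "\<exists>N. \<forall>n\<ge>N. g \<le> real (Suc n) / real n * c"
  proof (intro exI allI impI)
    fix n :: nat assume "1 \<le> n"
    then show "g \<le> real (Suc n) / real n * c" using assms[of "Suc n"] by simp
  qed
qed

theorem mainTheorem9:
  fixes t :: real
  assumes "0 \<le> t" and "t \<le> 1"
  shows "f_fun t = l_fun t"
proof -
  define S where "S = {g. \<forall>V w. weighted_digraph V w \<and> total_weight V w > 0 \<and> theta V w = t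
                 \<longrightarrow> mac V w \<ge> g * total_weight V w}"
  have "l_fun t \<in> S" unfolding S_def using mac_ge_l_fun assms(1) by blast
  moreover have "g \<le> l_fun t" if "g \<in> S" for g
  proof (rule le_of_le_n_over_n_minus_one_mult)
    fix n :: nat assume "2 \<le> n"
    note n = \<open>2 \<le> n\<close> assms
    have "g * total_weight {..<2 * n} (two_cliques n t) \<le> mac {..<2 * n} (two_cliques n t)"
      using that[unfolded S_def, simplified, rule_format, of "{..<2 * n}" "two_cliques n t"]
        two_cliques_weighted_digraph[OF n] two_cliques_theta[OF n] two_cliques_total_weight[OF n]
      by simp
    then show "g \<le> real n / (real n - 1) * l_fun t"
      using two_cliques_mac_le[OF n] two_cliques_total_weight[OF n] by simp
  qed
  ultimately have "Sup S = l_fun t" by (intro cSup_eq_maximum) auto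
  then show ?thesis unfolding f_fun_def S_def .
qed

end
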